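(* Let $\Theta$ be a compact subset of $(0,1/2)\times(\mathbb{R}^2\setminus\Delta)$, $\Delta=\{(x,x):x\in\mathbb{R}\}$, and let $P<1/2$ be such that $p\le P$ for all $(p,\alpha,\beta)\in\Theta$. Let $g$ be a probability density on $\mathbb{R}$ of the form $g(x)=p_0f(x-\alpha_0)+(1-p_0)f(x-\beta_0)$ with $(p_0,\alpha_0,\beta_0)\in\Theta$ and $f$ a probability density, and let $X_1,\dots,X_n$ be real numbers (observations). For $\theta=(p,\alpha,\beta)\in\Theta$, $u\in\mathbb{R}$, let $M(\theta,u)=pe^{iu\alpha}+(1-p)e^{iu\beta}$, $$Z_k(\theta,u)=\frac{e^{iuX_k}}{M(\theta,u)}-\frac{e^{-iuX_k}}{M(\theta,-u)},\qquad J(\theta,u)=\frac{g^*(u)}{M(\theta,u)}-\frac{g^*(-u)}{M(\theta,-u)},$$ and let $\dot Z_k,\dot J$ and $\ddot Z_k$ denote the gradients and the Hessian with respect to $\theta$. Then for all $u\in\mathbb{R}$ and all $k\in\{1,\dots,n\}$: 1. $\max\{\sup_{\theta\in\Theta}|Z_k(\theta,u)|,\sup_{\theta\in\Theta}|J(\theta,u)|\}\le\frac{2}{1-2P}$; 2. $\max\{\sup_{\theta\in\Theta}\|\dot Z_k(\theta,u)\|,\sup_{\theta\in\Theta}\|\dot J(\theta,u)\|\}\le\frac{4(1+|u|)}{(1-2P)^2}$; 3. $\|\ddot Z_k(\theta,u)\|_2\le\frac{C(1+|u|+u^2)}{(1-2P)^3}$ for some absolute constant $C>0$ and all $\theta\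in\Theta$.
   Context: $g^*(u)=\int e^{ixu}g(x)\,dx$ is the Fourier transform; $\|v\|$ is the Euclidean (Hermitian) norm of a vector and $\|A\|_2^2=\mathrm{tr}(A^\top A)$ for a matrix $A$. *)

theory Defs
  imports "HOL-Analysis.Analysis"
begin

text \<open>Parameters theta = (p, alpha, beta) are encoded as vectors in real^3:
  theta$1 = p, theta$2 = alpha, theta$3 = beta.\<close>

definition prob_density :: "(real \<Rightarrow> real) \<Rightarrow> bool" where
  "prob_density f \<longleftrightarrow> f \<in> borel_measurable lborel \<and> (\<forall>x. 0 \<le> f x)
      \<and> integrable lborel f \<and> integral\<^sup>L lborel f = 1"

definition fourier :: "(real \<Rightarrow> real) \<Rightarrow> real \<Rightarrow> complex" where
  "fourier g u = integral\<^sup>L lborel (\<lambda>x. cis (u * x) * complex_of_real (g x))"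

definition Mfun :: "real^3 \<Rightarrow> real \<Rightarrow> complex" where
  "Mfun \<theta> u = complex_of_real (\<theta>$1) * cis (u * \<theta>$2)
             + complex_of_real (1 - \<theta>$1) * cis (u * \<theta>$3)"

definition Zfun :: "real \<Rightarrow> real^3 \<Rightarrow> real \<Rightarrow> complex" where
  "Zfun x \<theta> u = cis (u * x) / Mfun \<theta> u - cis (- u * x) / Mfun \<theta> (- u)"

definition Jfun :: "(real \<Rightarrow> real) \<Rightarrow> real^3 \<Rightarrow> real \<Rightarrow> complex" where
  "Jfun g \<theta> u = fourier g u / Mfun \<theta> u - fourier g (- u) / Mfun \<theta> (- u)"

definition partial :: "3 \<Rightarrow> (real^3 \<Rightarrow> complex) \<Rightarrow> real^3 \<Rightarrow> complex" where
  "partial i F \<theta> = frechet_derivative F (at \<theta>) (axis i 1)"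

text \<open>Gradient as a vector in complex^3 (its norm is the Hermitian norm) and Hessian as a
  complex 3x3 matrix (its norm is the Frobenius norm sqrt(sum |a_ij|^2)).\<close>
definition grad :: "(real^3 \<Rightarrow> complex) \<Rightarrow> real^3 \<Rightarrow> complex^3" where
  "grad F \<theta> = (\<chi> i. partial i F \<theta>)"

definition hessian :: "(real^3 \<Rightarrow> complex) \<Rightarrow> real^3 \<Rightarrow> complex^3^3" where
  "hessian F \<theta> = (\<chi> i j. partial j (partial i F) \<theta>)"

end

theory Submission
  imports Defs
begin

text \<open>Both Z_k and J have the form c1 / M(\<theta>,u) - c2 / M(\<theta>,-u) with |c1|, |c2| \<le> 1
  (for J because |g^*| \<le> \<integral>g = 1). Since p \<le> P < 1/2, the reverse triangle inequality gives
  |M(\<theta>,\<plusminus>u)| \<ge> (1 - p) - p \<ge> 1 - 2P, while the first and second partials of M are bounded by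
  2 + |u| and |u| + u^2. Differentiating the quotients once and twice and bounding every
  entry termwise yields the three estimates.\<close>

definition has_partials :: "(real^'n \<Rightarrow> complex) \<Rightarrow> ('n \<Rightarrow> complex) \<Rightarrow> real^'n \<Rightarrow> bool" where
  "has_partials F D t \<longleftrightarrow> (F has_derivative (\<lambda>h. \<Sum>i\<in>UNIV. complex_of_real (h$i) * D i)) (at t)"

lemma has_derivative_vec_nth: "((\<lambda>t::real^'n. t$i) has_derivative (\<lambda>h. h$i)) F"
  by (rule bounded_linear_imp_has_derivative) auto

lemma partial_eq_if_has_partials:
  assumes "has_partials F D t"
  shows "partial j F t = D j"
proof -
  have "partial j F t = (\<Sum>i\<in>UNIV. complex_of_real (axis j 1 $ i) * D i)"
    unfolding partial_def frechet_derivative_at[OF assms[unfolded has_partials_def], symmetric] ..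
  also have "\<dots> = (\<Sum>i\<in>UNIV. if i = j then D i else 0)"
    by (rule sum.cong) (auto simp: axis_def)
  finally show ?thesis by simp
qed

lemma has_partials_cong:
  assumes "has_partials F D t" "\<And>s. F s = G s" "\<And>i. D i = E i"
  shows "has_partials G E t"
  using assms by (metis ext)

lemma has_partials_const: "has_partials (\<lambda>s. c) (\<lambda>i. 0) t"
  by (simp add: has_partials_def)

lemma has_partials_diff:
  assumes "has_partials F D t" "has_partials G E t"
  shows "has_partials (\<lambda>s. F s - G s) (\<lambda>i. D i - E i) t"
  using has_derivative_diff[OF assms[unfolded has_partials_def]]
  by (simp add: has_partials_def sum_subtractf right_diff_distrib)

lemma has_partials_mult:
  assumes "has_partials F D t" "has_partials G E t"
  shows "has_partials (\<lambda>s. F s * G s) (\<lambda>i. F t * E i + D i * G t) t"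
proof -
  have "(\<lambda>h. \<Sum>i\<in>UNIV. complex_of_real (h$i) * (F t * E i + D i * G t))
      = (\<lambda>h. F t * (\<Sum>i\<in>UNIV. complex_of_real (h$i) * E i) + (\<Sum>i\<in>UNIV. complex_of_real (h$i) * D i) * G t)"
    by (simp add: distrib_left sum.distrib sum_distrib_left sum_distrib_right mult_ac)
  then show ?thesis
    using has_derivative_mult[OF assms[unfolded has_partials_def]] by (simp add: has_partials_def)
qed

lemma has_partials_inverse:
  assumes "has_partials F D t" "F t \<noteq> 0"
  shows "has_partials (\<lambda>s. inverse (F s)) (\<lambda>i. - D i / (F t)^2) t"
proof -
  have "(\<lambda>h. \<Sum>i\<in>UNIV. complex_of_real (h$i) * (- D i / (F t)^2))
      = (\<lambda>h. - (inverse (F t) * (\<Sum>i\<in>UNIV. complex_of_real (h$i) * D i) * inverse (F t)))"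
    by (simp add: sum_distrib_left sum_distrib_right sum_negf divide_inverse power2_eq_square mult_ac)
  then show ?thesis
    using Deriv.has_derivative_inverse[OF assms(2) assms(1)[unfolded has_partials_def]]
    by (simp add: has_partials_def)
qed

lemma has_partials_const_divide:
  assumes "has_partials F D t" "F t \<noteq> 0"
  shows "has_partials (\<lambda>s. c / F s) (\<lambda>i. - c * D i / (F t)^2) t"
  by (rule has_partials_cong[OF has_partials_mult[OF has_partials_const[of c] has_partials_inverse[OF assms]]])
    (simp_all add: divide_inverse)

lemma has_partials_quotient_partial:
  assumes F: "has_partials F (\<lambda>i. D i t) t" and D: "has_partials (D j) (DD j) t"
    and "F t \<noteq> 0"
  shows "has_partials (\<lambda>s. - c * D j s / (F s)^2)
           (\<lambda>i. - c * DD j i / (F t)^2 + 2 * c * D j t * D i t / (F t)^3) t"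
proof -
  have inv: "has_partials (\<lambda>s. inverse (F s)) (\<lambda>i. - D i t / (F t)^2) t"
    by (rule has_partials_inverse[OF F assms(3)])
  show ?thesis
    using has_partials_mult[OF has_partials_mult[OF has_partials_const[of "- c"] D] has_partials_mult[OF inv inv]]
    by (rule has_partials_cong)
      (use assms(3) in \<open>simp_all add: field_simps power2_eq_square power3_eq_cube\<close>)
qed

lemma partial_partial_eq_if_has_partials:
  assumes "open S" "t \<in> S" "\<And>s. s \<in> S \<Longrightarrow> has_partials F (\<lambda>i. D i s) s"
    and "has_partials (D i) (DD i) t"
  shows "partial j (partial i F) t = DD i j"
proof (rule partial_eq_if_has_partials)
  show "has_partials (partial i F) (DD i) t"
    using assms(4) unfolding has_partials_def
    by (rule has_derivative_transform_within_open[OF _ assms(1,2)])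
      (simp add: partial_eq_if_has_partials[OF assms(3)])
qed

definition dMfun :: "real \<Rightarrow> 3 \<Rightarrow> real^3 \<Rightarrow> complex" where
  "dMfun u j t =
     (if j = 1 then cis (u * t$2) - cis (u * t$3)
      else if j = 2 then complex_of_real (t$1) * (\<i> * u) * cis (u * t$2)
      else complex_of_real (1 - t$1) * (\<i> * u) * cis (u * t$3))"

definition ddMfun :: "real \<Rightarrow> 3 \<Rightarrow> 3 \<Rightarrow> real^3 \<Rightarrow> complex" where
  "ddMfun u j i t =
     (if j = 1 then
        (if i = 1 then 0 else if i = 2 then (\<i> * u) * cis (u * t$2) else - (\<i> * u) * cis (u * t$3))
      else if j = 2 then
        (if i = 1 then (\<i> * u) * cis (u * t$2)
         else if i = 2 then complex_of_real (t$1) * (\<i> * u)^2 * cis (u * t$2) else 0)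
      else
        (if i = 1 then - (\<i> * u) * cis (u * t$3) else if i = 2 then 0
         else complex_of_real (1 - t$1) * (\<i> * u)^2 * cis (u * t$3)))"

lemma has_partials_Mfun: "has_partials (\<lambda>t. Mfun t u) (\<lambda>j. dMfun u j t) t"
  unfolding has_partials_def Mfun_def
  apply (rule has_derivative_eq_rhs)
   apply (rule derivative_eq_intros has_derivative_vec_nth refl | simp)+
  apply (rule ext)
  by (simp add: sum_3 dMfun_def scaleR_conv_of_real algebra_simps)

lemma has_partials_dMfun: "has_partials (dMfun u j) (\<lambda>i. ddMfun u j i t) t"
proof -
  consider "j = 1" | "j = 2" | "j = 3" using exhaust_3 by blast
  then have "((\<lambda>s. dMfun u j s) has_derivative
               (\<lambda>h. \<Sum>i\<in>UNIV. complex_of_real (h$i) * ddMfun u j i t)) (at t)"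
  proof cases
    case 1 show ?thesis unfolding 1 dMfun_def
      apply simp
      apply (rule has_derivative_eq_rhs)
       apply (rule derivative_eq_intros has_derivative_vec_nth refl | simp)+
      apply (rule ext)
      by (simp add: sum_3 ddMfun_def scaleR_conv_of_real algebra_simps)
  next
    case 2 show ?thesis unfolding 2 dMfun_def
      apply simp
      apply (rule has_derivative_eq_rhs)
       apply (rule derivative_eq_intros has_derivative_vec_nth refl | simp)+
      apply (rule ext)
      by (simp add: sum_3 ddMfun_def scaleR_conv_of_real algebra_simps power2_eq_square)
  next
    case 3 show ?thesis unfolding 3 dMfun_def
      apply simp
      apply (rule has_derivative_eq_rhs)
       apply (rule derivative_eq_intros has_derivative_vec_nth refl | simp)+
      apply (rule ext)
      by (simp add: sum_3 ddMfun_def scaleR_conv_of_real algebra_simps power2_eq_square)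
  qed
  then show ?thesis by (simp add: has_partials_def)
qed

lemma open_Mfun_nonzero: "open {t. Mfun t u \<noteq> 0 \<and> Mfun t v \<noteq> 0}"
proof -
  have "continuous_on UNIV (\<lambda>t. Mfun t w)" for w
    using has_partials_Mfun unfolding has_partials_def
    by (meson continuous_at_imp_continuous_on has_derivative_continuous)
  then show ?thesis
    by (intro open_Collect_conj open_Collect_neq) auto
qed

lemma cmod_one_minus_of_real [simp]: "cmod (1 - complex_of_real x) = \<bar>1 - x\<bar>"
  by (metis of_real_1 of_real_diff norm_of_real)

lemma Mfun_norm_ge:
  assumes "0 \<le> t$1" "t$1 \<le> 1"
  shows "1 - 2 * t$1 \<le> cmod (Mfun t u)"
proof -
  have "cmod (complex_of_real (1 - t$1) * cis (u * t$3)) - cmod (complex_of_real (t$1) * cis (u * t$2))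
        \<le> cmod (complex_of_real (1 - t$1) * cis (u * t$3) + complex_of_real (t$1) * cis (u * t$2))"
    by (rule norm_diff_ineq)
  then show ?thesis using assms by (simp add: Mfun_def norm_mult add.commute)
qed

lemma dMfun_1_norm_le: "cmod (dMfun u 1 t) \<le> 2"
  unfolding dMfun_def using norm_triangle_ineq4[of "cis (u * t$2)" "cis (u * t$3)"] by simp

lemma dMfun_norm_le_abs:
  "0 \<le> t$1 \<Longrightarrow> t$1 \<le> 1 \<Longrightarrow> j \<noteq> 1 \<Longrightarrow> cmod (dMfun u j t) \<le> \<bar>u\<bar>"
  unfolding dMfun_def by (auto simp: norm_mult mult_le_cancel_right1 intro: mult_left_le_one_le)

lemma dMfun_norm_le: "0 \<le> t$1 \<Longrightarrow> t$1 \<le> 1 \<Longrightarrow> cmod (dMfun u j t) \<le> 2 + \<bar>u\<bar>"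
  using dMfun_1_norm_le[of u t] dMfun_norm_le_abs[of t j u] by (cases "j = 1") auto

lemma ddMfun_norm_le: "0 \<le> t$1 \<Longrightarrow> t$1 \<le> 1 \<Longrightarrow> cmod (ddMfun u j i t) \<le> \<bar>u\<bar> + u^2"
proof -
  assume "0 \<le> t$1" "t$1 \<le> 1"
  moreover have "a * u^2 \<le> \<bar>u\<bar> + u^2" if "0 \<le> a" "a \<le> 1" for a
    using mult_left_le_one_le[OF _ that, of "u^2"] by simp
  ultimately show ?thesis
    unfolding ddMfun_def by (auto simp: norm_mult norm_power mult_le_cancel_right1)
qed

lemma norm_quotient_partial_le:
  assumes "cmod c \<le> 1" "0 < d" "d \<le> cmod m"
  shows "cmod (- c * a / m^2) \<le> cmod a / d^2"
proof -
  have "cmod (- c * a / m^2) = cmod c * cmod a / cmod m ^ 2"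
    by (simp add: norm_mult norm_divide norm_power)
  also have "\<dots> \<le> 1 * cmod a / d^2"
    using assms by (intro frac_le mult_right_mono power_mono) auto
  finally show ?thesis by simp
qed

lemma norm_quotient_partial2_le:
  assumes c: "cmod c \<le> 1" and d: "0 < d" "d \<le> 1" "d \<le> cmod m"
    and "cmod a \<le> A" "cmod b1 \<le> B" "cmod b2 \<le> B"
  shows "cmod (- c * a / m^2 + 2 * c * b1 * b2 / m^3) \<le> (A + 2 * B^2) / d^3"
proof -
  have "0 \<le> A" "0 \<le> B" using assms(5,6) norm_ge_zero order_trans by blast+
  have "cmod (- c * a / m^2) \<le> A / d^2"
    using norm_quotient_partial_le[OF c d(1,3)] assms(5) d(1)
    by (meson divide_right_mono order_trans zero_le_power2)
  also have "\<dots> \<le> A / d^3"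
    using d \<open>0 \<le> A\<close> by (intro divide_left_mono mult_pos_pos) (auto simp: power_decreasing)
  finally have first: "cmod (- c * a / m^2) \<le> A / d^3" .
  have "cmod (2 * c * b1 * b2 / m^3) = 2 * cmod c * cmod b1 * cmod b2 / cmod m ^ 3"
    by (simp add: norm_mult norm_divide norm_power)
  also have "\<dots> \<le> 2 * 1 * B * B / d^3"
    using assms \<open>0 \<le> B\<close> by (intro frac_le mult_mono power_mono) auto
  finally have second: "cmod (2 * c * b1 * b2 / m^3) \<le> 2 * B^2 / d^3"
    by (simp add: power2_eq_square)
  show ?thesis
    using norm_triangle_ineq[of "- c * a / m^2" "2 * c * b1 * b2 / m^3"] first second
    by (simp add: add_divide_distrib)
qed

definition Mratio_diff :: "complex \<Rightarrow> complex \<Rightarrow> real \<Rightarrow> real^3 \<Rightarrow> complex" where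
  "Mratio_diff c1 c2 u t = c1 / Mfun t u - c2 / Mfun t (- u)"

definition Mratio_diff_partial :: "complex \<Rightarrow> complex \<Rightarrow> real \<Rightarrow> 3 \<Rightarrow> real^3 \<Rightarrow> complex" where
  "Mratio_diff_partial c1 c2 u i t =
     - c1 * dMfun u i t / (Mfun t u)^2 - - c2 * dMfun (- u) i t / (Mfun t (- u))^2"

definition Mratio_diff_partial2 :: "complex \<Rightarrow> complex \<Rightarrow> real \<Rightarrow> 3 \<Rightarrow> 3 \<Rightarrow> real^3 \<Rightarrow> complex" where
  "Mratio_diff_partial2 c1 c2 u i j t =
     (- c1 * ddMfun u i j t / (Mfun t u)^2 + 2 * c1 * dMfun u i t * dMfun u j t / (Mfun t u)^3)
   - (- c2 * ddMfun (- u) i j t / (Mfun t (- u))^2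
      + 2 * c2 * dMfun (- u) i t * dMfun (- u) j t / (Mfun t (- u))^3)"

lemma has_partials_Mratio_diff:
  assumes "Mfun t u \<noteq> 0" "Mfun t (- u) \<noteq> 0"
  shows "has_partials (Mratio_diff c1 c2 u) (\<lambda>i. Mratio_diff_partial c1 c2 u i t) t"
  by (rule has_partials_cong[OF has_partials_diff[OF
        has_partials_const_divide[OF has_partials_Mfun assms(1)]
        has_partials_const_divide[OF has_partials_Mfun assms(2)]]])
    (simp_all add: Mratio_diff_def Mratio_diff_partial_def)

lemma has_partials_Mratio_diff_partial:
  assumes "Mfun t u \<noteq> 0" "Mfun t (- u) \<noteq> 0"
  shows "has_partials (Mratio_diff_partial c1 c2 u i) (\<lambda>j. Mratio_diff_partial2 c1 c2 u i j t) t"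
  by (rule has_partials_cong[OF has_partials_diff[OF
        has_partials_quotient_partial[OF has_partials_Mfun has_partials_dMfun assms(1)]
        has_partials_quotient_partial[OF has_partials_Mfun has_partials_dMfun assms(2)]]])
    (simp_all add: Mratio_diff_partial_def Mratio_diff_partial2_def)

lemma grad_Mratio_diff:
  assumes "Mfun t u \<noteq> 0" "Mfun t (- u) \<noteq> 0"
  shows "grad (Mratio_diff c1 c2 u) t $ i = Mratio_diff_partial c1 c2 u i t"
  by (simp add: grad_def partial_eq_if_has_partials[OF has_partials_Mratio_diff[OF assms]])

lemma hessian_Mratio_diff:
  assumes "Mfun t u \<noteq> 0" "Mfun t (- u) \<noteq> 0"
  shows "hessian (Mratio_diff c1 c2 u) t $ i $ j = Mratio_diff_partial2 c1 c2 u i j t"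
proof -
  have "partial j (partial i (Mratio_diff c1 c2 u)) t = Mratio_diff_partial2 c1 c2 u i j t"
    by (rule partial_partial_eq_if_has_partials[where D = "Mratio_diff_partial c1 c2 u"
          and DD = "\<lambda>i j. Mratio_diff_partial2 c1 c2 u i j t", OF open_Mfun_nonzero[of u "- u"]])
      (use assms has_partials_Mratio_diff has_partials_Mratio_diff_partial in auto)
  then show ?thesis by (simp add: hessian_def)
qed

lemma norm_vec3_eq:
  "norm (v :: 'a::real_normed_vector^3) = sqrt ((norm (v$1))^2 + (norm (v$2))^2 + (norm (v$3))^2)"
  by (simp add: norm_vec_def L2_set_def sum_3)

lemma norm_le_sum_norm_nth: "norm (v :: 'a::real_normed_vector^'n) \<le> (\<Sum>i\<in>UNIV. norm (v$i))"
  unfolding norm_vec_def by (rule L2_set_le_sum) auto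

context
  fixes P :: real and \<theta> :: "real^3"
  assumes weight: "0 < \<theta>$1" "\<theta>$1 \<le> P" "P < 1/2"
begin

lemma Mfun_norm_ge_margin: "1 - 2 * P \<le> cmod (Mfun \<theta> v)"
  using Mfun_norm_ge[of \<theta> v] weight by simp

lemma Mfun_nonzero: "Mfun \<theta> v \<noteq> 0"
  using Mfun_norm_ge_margin[of v] weight by auto

lemma norm_Mratio_diff_le:
  assumes "cmod c1 \<le> 1" "cmod c2 \<le> 1"
  shows "cmod (Mratio_diff c1 c2 u \<theta>) \<le> 2 / (1 - 2 * P)"
proof -
  have quot: "cmod (c / Mfun \<theta> v) \<le> 1 / (1 - 2 * P)" if "cmod c \<le> 1" for c v
    unfolding norm_divide using that Mfun_norm_ge_margin[of v] weight by (intro frac_le) auto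
  have "cmod (Mratio_diff c1 c2 u \<theta>) \<le> cmod (c1 / Mfun \<theta> u) + cmod (c2 / Mfun \<theta> (- u))"
    unfolding Mratio_diff_def by (rule norm_triangle_ineq4)
  also have "\<dots> \<le> 1 / (1 - 2 * P) + 1 / (1 - 2 * P)"
    by (intro add_mono quot assms)
  finally show ?thesis by (simp add: add_divide_distrib[symmetric])
qed

lemma norm_Mratio_diff_partial_le:
  assumes "cmod c1 \<le> 1" "cmod c2 \<le> 1" "cmod (dMfun u i \<theta>) \<le> b" "cmod (dMfun (- u) i \<theta>) \<le> b"
  shows "cmod (Mratio_diff_partial c1 c2 u i \<theta>) \<le> 2 * b / (1 - 2 * P)^2"
proof -
  have d: "0 < 1 - 2 * P" using weight by simp
  have "cmod (Mratio_diff_partial c1 c2 u i \<theta>)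
        \<le> cmod (- c1 * dMfun u i \<theta> / (Mfun \<theta> u)^2) + cmod (- c2 * dMfun (- u) i \<theta> / (Mfun \<theta> (- u))^2)"
    unfolding Mratio_diff_partial_def by (rule norm_triangle_ineq4)
  also have "\<dots> \<le> cmod (dMfun u i \<theta>) / (1 - 2 * P)^2 + cmod (dMfun (- u) i \<theta>) / (1 - 2 * P)^2"
    by (intro add_mono norm_quotient_partial_le assms d Mfun_norm_ge_margin)
  also have "\<dots> \<le> 2 * b / (1 - 2 * P)^2"
    using assms(3,4) by (simp add: add_divide_distrib[symmetric] divide_right_mono)
  finally show ?thesis .
qed

lemma norm_grad_Mratio_diff_le:
  assumes "cmod c1 \<le> 1" "cmod c2 \<le> 1"
  shows "norm (grad (Mratio_diff c1 c2 u) \<theta>) \<le> 4 * (1 + \<bar>u\<bar>) / (1 - 2 * P)^2"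
proof -
  define x where "x = 1 / (1 - 2 * P)^2"
  have t: "0 \<le> \<theta>$1" "\<theta>$1 \<le> 1" using weight by auto
  have entry: "grad (Mratio_diff c1 c2 u) \<theta> $ i = Mratio_diff_partial c1 c2 u i \<theta>" for i
    by (rule grad_Mratio_diff[OF Mfun_nonzero Mfun_nonzero])
  have "cmod (grad (Mratio_diff c1 c2 u) \<theta> $ 1) \<le> 4 * x"
    using norm_Mratio_diff_partial_le[OF assms dMfun_1_norm_le dMfun_1_norm_le]
    by (simp add: entry x_def)
  moreover have "cmod (grad (Mratio_diff c1 c2 u) \<theta> $ i) \<le> 2 * \<bar>u\<bar> * x" if "i \<noteq> 1" for i
    using norm_Mratio_diff_partial_le[OF assms dMfun_norm_le_abs[OF t that, of u]
        dMfun_norm_le_abs[OF t that, of "- u", unfolded abs_minus_cancel]]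
    by (simp add: entry x_def)
  ultimately have "(cmod (grad (Mratio_diff c1 c2 u) \<theta> $ 1))^2 \<le> (4 * x)^2"
    "(cmod (grad (Mratio_diff c1 c2 u) \<theta> $ 2))^2 \<le> (2 * \<bar>u\<bar> * x)^2"
    "(cmod (grad (Mratio_diff c1 c2 u) \<theta> $ 3))^2 \<le> (2 * \<bar>u\<bar> * x)^2"
    by (intro power_mono norm_ge_zero; simp)+
  moreover have "(4 * x)^2 + (2 * \<bar>u\<bar> * x)^2 + (2 * \<bar>u\<bar> * x)^2 = (16 + 8 * u^2) * x^2"
    by (simp add: power_mult_distrib algebra_simps)
  moreover have "(16 + 8 * u^2) * x^2 \<le> (4 * (1 + \<bar>u\<bar>) * x)^2"
    unfolding power_mult_distrib
    by (intro mult_right_mono) (use zero_le_power2[of u] in \<open>auto simp: power2_sum\<close>)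
  ultimately have "norm (grad (Mratio_diff c1 c2 u) \<theta>) \<le> sqrt ((4 * (1 + \<bar>u\<bar>) * x)^2)"
    unfolding norm_vec3_eq by (intro real_sqrt_le_mono) linarith
  then show ?thesis by (simp add: x_def)
qed

lemma norm_hessian_Mratio_diff_le:
  assumes "cmod c1 \<le> 1" "cmod c2 \<le> 1"
  shows "norm (hessian (Mratio_diff c1 c2 u) \<theta>) \<le> 162 * (1 + \<bar>u\<bar> + u^2) / (1 - 2 * P)^3"
proof -
  define B where "B = (1 + \<bar>u\<bar> + u^2) / (1 - 2 * P)^3"
  have t: "0 \<le> \<theta>$1" "\<theta>$1 \<le> 1" and d: "0 < 1 - 2 * P" "1 - 2 * P \<le> 1" using weight by auto
  have quot: "cmod (- c * ddMfun v i j \<theta> / (Mfun \<theta> v)^2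
                + 2 * c * dMfun v i \<theta> * dMfun v j \<theta> / (Mfun \<theta> v)^3) \<le> 9 * B"
    if "cmod c \<le> 1" "\<bar>v\<bar> = \<bar>u\<bar>" for c v i j
  proof -
    have "v^2 = u^2" using that(2) by (metis power2_abs)
    then have "(\<bar>v\<bar> + v^2 + 2 * (2 + \<bar>v\<bar>)^2) / (1 - 2 * P)^3 \<le> 9 * (1 + \<bar>u\<bar> + u^2) / (1 - 2 * P)^3"
      using d that(2) zero_le_power2[of u]
      by (intro divide_right_mono) (auto simp: power2_sum)
    moreover have "9 * B = 9 * (1 + \<bar>u\<bar> + u^2) / (1 - 2 * P)^3"
      by (simp add: B_def)
    ultimately show ?thesis
      using norm_quotient_partial2_le[OF that(1) d Mfun_norm_ge_margin[of v]
          ddMfun_norm_le[OF t, of v i j] dMfun_norm_le[OF t, of v i] dMfun_norm_le[OF t, of v j]]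
      by linarith
  qed
  have entry: "cmod (hessian (Mratio_diff c1 c2 u) \<theta> $ i $ j) \<le> 18 * B" for i j
    unfolding hessian_Mratio_diff[OF Mfun_nonzero Mfun_nonzero] Mratio_diff_partial2_def
    using norm_triangle_ineq4 quot[OF assms(1), of u i j] quot[OF assms(2), of "- u" i j]
    by (smt (verit) abs_minus_cancel)
  have "norm (hessian (Mratio_diff c1 c2 u) \<theta>)
        \<le> (\<Sum>i\<in>UNIV. \<Sum>j\<in>UNIV. cmod (hessian (Mratio_diff c1 c2 u) \<theta> $ i $ j))"
    by (rule order_trans[OF norm_le_sum_norm_nth sum_mono[OF norm_le_sum_norm_nth]])
  also have "\<dots> \<le> (\<Sum>i\<in>(UNIV::3 set). \<Sum>j\<in>(UNIV::3 set). 18 * B)"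
    by (intro sum_mono entry)
  finally show ?thesis by (simp add: B_def)
qed

end

lemma fourier_norm_le:
  assumes "prob_density g"
  shows "cmod (fourier g v) \<le> 1"
proof -
  have "cmod (fourier g v) \<le> (\<integral>x. norm (cis (v * x) * complex_of_real (g x)) \<partial>lborel)"
    unfolding fourier_def by (rule integral_norm_bound)
  also have "\<dots> = (\<integral>x. g x \<partial>lborel)"
    using assms unfolding prob_density_def
    by (intro Bochner_Integration.integral_cong) (auto simp: norm_mult)
  finally show ?thesis
    using assms by (simp add: prob_density_def)
qed

lemma Zfun_eq_Mratio_diff: "(\<lambda>t. Zfun x t u) = Mratio_diff (cis (u * x)) (cis (- u * x)) u"
  by (auto simp: Zfun_def Mratio_diff_def)

lemma Jfun_eq_Mratio_diff: "(\<lambda>t. Jfun g t u) = Mratio_diff (fourier g u) (fourier g (- u)) u"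
  by (auto simp: Jfun_def Mratio_diff_def)

lemma Zfun_Jfun_bounds:
  assumes weight: "0 < \<theta>$1" "\<theta>$1 \<le> P" "P < 1/2" and g: "prob_density g"
  shows "cmod (Zfun x \<theta> u) \<le> 2 / (1 - 2 * P)"
    and "cmod (Jfun g \<theta> u) \<le> 2 / (1 - 2 * P)"
    and "norm (grad (\<lambda>t. Zfun x t u) \<theta>) \<le> 4 * (1 + \<bar>u\<bar>) / (1 - 2 * P)^2"
    and "norm (grad (\<lambda>t. Jfun g t u) \<theta>) \<le> 4 * (1 + \<bar>u\<bar>) / (1 - 2 * P)^2"
    and "norm (hessian (\<lambda>t. Zfun x t u) \<theta>) \<le> 162 * (1 + \<bar>u\<bar> + u^2) / (1 - 2 * P)^3"
proof -
  have Z: "Zfun x \<theta> u = Mratio_diff (cis (u * x)) (cis (- u * x)) u \<theta>"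
    and J: "Jfun g \<theta> u = Mratio_diff (fourier g u) (fourier g (- u)) u \<theta>"
    by (simp_all add: Zfun_def Jfun_def Mratio_diff_def)
  note c = norm_cis fourier_norm_le[OF g]
  show "cmod (Zfun x \<theta> u) \<le> 2 / (1 - 2 * P)"
    unfolding Z by (rule norm_Mratio_diff_le[OF weight]) (simp_all add: c)
  show "cmod (Jfun g \<theta> u) \<le> 2 / (1 - 2 * P)"
    unfolding J by (rule norm_Mratio_diff_le[OF weight]) (simp_all add: c)
  show "norm (grad (\<lambda>t. Zfun x t u) \<theta>) \<le> 4 * (1 + \<bar>u\<bar>) / (1 - 2 * P)^2"
    unfolding Zfun_eq_Mratio_diff by (rule norm_grad_Mratio_diff_le[OF weight]) (simp_all add: c)
  show "norm (grad (\<lambda>t. Jfun g t u) \<theta>) \<le> 4 * (1 + \<bar>u\<bar>) / (1 - 2 * P)^2"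
    unfolding Jfun_eq_Mratio_diff by (rule norm_grad_Mratio_diff_le[OF weight]) (simp_all add: c)
  show "norm (hessian (\<lambda>t. Zfun x t u) \<theta>) \<le> 162 * (1 + \<bar>u\<bar> + u^2) / (1 - 2 * P)^3"
    unfolding Zfun_eq_Mratio_diff by (rule norm_hessian_Mratio_diff_le[OF weight]) (simp_all add: c)
qed

theorem lemma1:
  shows "\<exists>C>0. \<forall>(\<Theta>::(real^3) set) (P::real) (f::real \<Rightarrow> real) (g::real \<Rightarrow> real)
            (p0::real) (a0::real) (b0::real) (X::nat \<Rightarrow> real) (n::nat).
     compact \<Theta>
     \<and> \<Theta> \<subseteq> {\<theta>. 0 < \<theta>$1 \<and> \<theta>$1 < 1/2 \<and> \<theta>$2 \<noteq> \<theta>$3}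
     \<and> P < 1/2 \<and> (\<forall>\<theta>\<in>\<Theta>. \<theta>$1 \<le> P)
     \<and> prob_density f \<and> prob_density g
     \<and> vector [p0, a0, b0] \<in> \<Theta>
     \<and> (\<forall>x. g x = p0 * f (x - a0) + (1 - p0) * f (x - b0))
     \<longrightarrow> (\<forall>(u::real) k. k \<in> {1..n} \<longrightarrow>
            (\<forall>\<theta>\<in>\<Theta>. cmod (Zfun (X k) \<theta> u) \<le> 2 / (1 - 2*P)
                    \<and> cmod (Jfun g \<theta> u) \<le> 2 / (1 - 2*P))
          \<and> (\<forall>\<theta>\<in>\<Theta>. norm (grad (\<lambda>t. Zfun (X k) t u) \<theta>) \<le> 4 * (1 + \<bar>u\<bar>) / (1 - 2*P)^2
                    \<and> norm (grad (\<lambda>t. Jfun g t u) \<theta>) \<le> 4 * (1 + \<bar>u\<bar>) / (1 - 2*P)^2)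
          \<and> (\<forall>\<theta>\<in>\<Theta>. norm (hessian (\<lambda>t. Zfun (X k) t u) \<theta>)
                      \<le> C * (1 + \<bar>u\<bar> + u^2) / (1 - 2*P)^3))"
  by (intro exI[of _ 162] conjI zero_less_numeral allI impI ballI; elim conjE;
      rule Zfun_Jfun_bounds; fastforce)

end
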